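(* Assume (A1) and (A2). Then $Q$ is positive definite, and $$\|\hat AQ^{-1/2}\|_{2\to1}\le 1,\qquad \|Q^{-1/2}\|_{2\to1}\le\bar\kappa,\qquad Q\succeq\frac{1}{\bar\kappa^2}I_R.$$
   Context: $A\in\mathbb{R}^{D\times k}$ is a word-topic matrix (nonnegative entries, columns summing to $1$). $x^*\in\{z\in\mathbb{R}^k_{\ge0}:\sum z_i=1\}$. Assumption (A1): $R=\mathrm{supp}(x^* )$ has $|R|\le r$ and $x^*_i\ge\tau/r$ for all $i\in R$, where $\tau\in(0,1]$. Assumption (A2): for every $r$-sparse $v\in\mathbb{R}^k$, $\|Av\|_1\ge\|v\|_1/\bar\kappa$. Vectors supported on $R$ are identified with vectors in $\mathbb{R}^R$. $\hat A\in\mathbb{R}^{D\times R}$ is the submatrix of $A$ with columns in $R$, with rows $\hat a_i$. The Fisher information matrix is $Q=\sum_{i\in[D]:\hat a_i\neq 0}\hat a_i\hat a_i^\top/\langle\hat a_i,x^*\rangle$. For a matrix $M$, $\|M\|_{2\to1}=\sup_{\|z\|_2\le1}\|Mz\|_1$. *)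

theory Defs
  imports "HOL-Analysis.Analysis"
begin

(* Matrices are real-valued functions of two natural indices; a matrix "on a
   carrier S" is indexed by S x S.  Vectors are functions nat => real. *)

definition word_topic :: "nat \<Rightarrow> nat \<Rightarrow> (nat \<Rightarrow> nat \<Rightarrow> real) \<Rightarrow> bool" where
  "word_topic D k A \<longleftrightarrow> (\<forall>i<D. \<forall>j<k. A i j \<ge> 0) \<and> (\<forall>j<k. (\<Sum>i<D. A i j) = 1)"

definition in_simplex :: "nat \<Rightarrow> (nat \<Rightarrow> real) \<Rightarrow> bool" where
  "in_simplex k x \<longleftrightarrow> (\<forall>i<k. x i \<ge> 0) \<and> (\<Sum>i<k. x i) = 1"

definition supp :: "nat \<Rightarrow> (nat \<Rightarrow> real) \<Rightarrow> nat set" where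
  "supp k x = {i. i < k \<and> x i \<noteq> 0}"

definition A1 :: "nat \<Rightarrow> (nat \<Rightarrow> real) \<Rightarrow> nat \<Rightarrow> real \<Rightarrow> bool" where
  "A1 k x r \<tau> \<longleftrightarrow> card (supp k x) \<le> r \<and> (\<forall>i\<in>supp k x. x i \<ge> \<tau> / real r)"

definition A2 :: "nat \<Rightarrow> nat \<Rightarrow> (nat \<Rightarrow> nat \<Rightarrow> real) \<Rightarrow> nat \<Rightarrow> real \<Rightarrow> bool" where
  "A2 D k A r \<kappa> \<longleftrightarrow> (\<forall>v :: nat \<Rightarrow> real. card (supp k v) \<le> r \<longrightarrow>
      (\<Sum>i<D. \<bar>\<Sum>j<k. A i j * v j\<bar>) \<ge> (\<Sum>j<k. \<bar>v j\<bar>) / \<kappa>)"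

definition fisher :: "nat \<Rightarrow> nat set \<Rightarrow> (nat \<Rightarrow> nat \<Rightarrow> real) \<Rightarrow> (nat \<Rightarrow> real) \<Rightarrow> nat \<Rightarrow> nat \<Rightarrow> real" where
  "fisher D R A x = (\<lambda>j l. if j \<in> R \<and> l \<in> R then
      (\<Sum>i\<in>{i. i < D \<and> (\<exists>m\<in>R. A i m \<noteq> 0)}. A i j * A i l / (\<Sum>m\<in>R. A i m * x m))
     else 0)"

definition mat_mult :: "nat set \<Rightarrow> (nat \<Rightarrow> nat \<Rightarrow> real) \<Rightarrow> (nat \<Rightarrow> nat \<Rightarrow> real) \<Rightarrow> nat \<Rightarrow> nat \<Rightarrow> real" where
  "mat_mult S M N = (\<lambda>i l. \<Sum>j\<in>S. M i j * N j l)"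

definition id_on :: "nat set \<Rightarrow> nat \<Rightarrow> nat \<Rightarrow> real" where
  "id_on S = (\<lambda>j l. if j \<in> S \<and> l \<in> S \<and> j = l then 1 else 0)"

definition supported_on :: "nat set \<Rightarrow> (nat \<Rightarrow> nat \<Rightarrow> real) \<Rightarrow> bool" where
  "supported_on S M \<longleftrightarrow> (\<forall>j l. (j \<notin> S \<or> l \<notin> S) \<longrightarrow> M j l = 0)"

definition symmetric_on :: "nat set \<Rightarrow> (nat \<Rightarrow> nat \<Rightarrow> real) \<Rightarrow> bool" where
  "symmetric_on S M \<longleftrightarrow> (\<forall>j\<in>S. \<forall>l\<in>S. M j l = M l j)"

definition quad_form :: "nat set \<Rightarrow> (nat \<Rightarrow> nat \<Rightarrow> real) \<Rightarrow> (nat \<Rightarrow> real) \<Rightarrow> real" where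
  "quad_form S M z = (\<Sum>j\<in>S. \<Sum>l\<in>S. z j * M j l * z l)"

definition pos_semidef_on :: "nat set \<Rightarrow> (nat \<Rightarrow> nat \<Rightarrow> real) \<Rightarrow> bool" where
  "pos_semidef_on S M \<longleftrightarrow> symmetric_on S M \<and> (\<forall>z. quad_form S M z \<ge> 0)"

definition pos_def_on :: "nat set \<Rightarrow> (nat \<Rightarrow> nat \<Rightarrow> real) \<Rightarrow> bool" where
  "pos_def_on S M \<longleftrightarrow> symmetric_on S M \<and> (\<forall>z. (\<exists>j\<in>S. z j \<noteq> 0) \<longrightarrow> quad_form S M z > 0)"

definition loewner_ge :: "nat set \<Rightarrow> (nat \<Rightarrow> nat \<Rightarrow> real) \<Rightarrow> (nat \<Rightarrow> nat \<Rightarrow> real) \<Rightarrow> bool" where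
  "loewner_ge S M N \<longleftrightarrow> pos_semidef_on S (\<lambda>j l. M j l - N j l)"

definition mat_inv_on :: "nat set \<Rightarrow> (nat \<Rightarrow> nat \<Rightarrow> real) \<Rightarrow> nat \<Rightarrow> nat \<Rightarrow> real" where
  "mat_inv_on S M = (THE N. supported_on S N \<and>
      (\<forall>j\<in>S. \<forall>l\<in>S. mat_mult S N M j l = id_on S j l \<and> mat_mult S M N j l = id_on S j l))"

definition mat_sqrt_on :: "nat set \<Rightarrow> (nat \<Rightarrow> nat \<Rightarrow> real) \<Rightarrow> nat \<Rightarrow> nat \<Rightarrow> real" where
  "mat_sqrt_on S M = (THE P. supported_on S P \<and> pos_semidef_on S P \<and>
      (\<forall>j\<in>S. \<forall>l\<in>S. mat_mult S P P j l = M j l))"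

definition mat_inv_sqrt_on :: "nat set \<Rightarrow> (nat \<Rightarrow> nat \<Rightarrow> real) \<Rightarrow> nat \<Rightarrow> nat \<Rightarrow> real" where
  "mat_inv_sqrt_on S M = mat_inv_on S (mat_sqrt_on S M)"

definition norm_2_1 :: "nat set \<Rightarrow> nat set \<Rightarrow> (nat \<Rightarrow> nat \<Rightarrow> real) \<Rightarrow> real" where
  "norm_2_1 I S M = Sup {(\<Sum>i\<in>I. \<bar>\<Sum>j\<in>S. M i j * z j\<bar>) | z. (\<Sum>j\<in>S. (z j)\<^sup>2) \<le> 1}"

end

(*
  By (A2), every w supported on R satisfies |w|_1 <= kappa |A_R w|_1.  Weighted Cauchy-Schwarz
  with the weights <a_i, x*>, which sum to at most 1, gives |A_R w|_1^2 <= w^T Q w, and since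
  |w|_2 <= |w|_1 this yields Q >= kappa^-2 I, in particular Q > 0.  For w = Q^(-1/2) z the
  form w^T Q w equals |z|_2^2, so |A_R Q^(-1/2) z|_1 <= |z|_2 and, by (A2) once more,
  |Q^(-1/2) z|_1 <= kappa |z|_2.

  The positive square root of Q is obtained by rescaling Q to I + X with X a symmetric
  contraction and summing the binomial series of (I + X)^(1/2) and (I + X)^(-1/2); it is
  unique by a trace argument.
*)

theory Submission
  imports Defs "HOL-Computational_Algebra.Formal_Power_Series"
begin

definition mat_vec :: "nat set \<Rightarrow> (nat \<Rightarrow> nat \<Rightarrow> real) \<Rightarrow> (nat \<Rightarrow> real) \<Rightarrow> nat \<Rightarrow> real" where
  "mat_vec S M y = (\<lambda>j. \<Sum>l\<in>S. M j l * y l)"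

definition sq_norm :: "nat set \<Rightarrow> (nat \<Rightarrow> real) \<Rightarrow> real" where
  "sq_norm S y = (\<Sum>j\<in>S. (y j)\<^sup>2)"

definition bilin :: "nat set \<Rightarrow> (nat \<Rightarrow> nat \<Rightarrow> real) \<Rightarrow> (nat \<Rightarrow> real) \<Rightarrow> (nat \<Rightarrow> real) \<Rightarrow> real" where
  "bilin S M x y = (\<Sum>j\<in>S. \<Sum>l\<in>S. x j * M j l * y l)"

definition symmetric_mat :: "(nat \<Rightarrow> nat \<Rightarrow> real) \<Rightarrow> bool" where
  "symmetric_mat M \<longleftrightarrow> (\<forall>j l. M j l = M l j)"

primrec mat_pow :: "nat set \<Rightarrow> (nat \<Rightarrow> nat \<Rightarrow> real) \<Rightarrow> nat \<Rightarrow> nat \<Rightarrow> nat \<Rightarrow> real" where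
  "mat_pow S X 0 = id_on S"
| "mat_pow S X (Suc n) = mat_mult S X (mat_pow S X n)"

lemma quad_form_eq_bilin: "quad_form S M z = bilin S M z z"
  unfolding quad_form_def bilin_def ..

lemma supported_on_ext:
  assumes "supported_on S M" "supported_on S N" "\<And>j l. j \<in> S \<Longrightarrow> l \<in> S \<Longrightarrow> M j l = N j l"
  shows "M = N"
  using assms unfolding supported_on_def by (intro ext) metis

lemma symmetric_matI: "supported_on S M \<Longrightarrow> symmetric_on S M \<Longrightarrow> symmetric_mat M"
  unfolding supported_on_def symmetric_on_def symmetric_mat_def by metis

lemma symmetric_mat_id_on: "symmetric_mat (id_on S)"
  unfolding symmetric_mat_def id_on_def by auto

lemma supported_on_id_on: "supported_on S (id_on S)"
  unfolding supported_on_def id_on_def by auto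

lemma supported_on_mat_mult:
  "supported_on S M \<Longrightarrow> supported_on S N \<Longrightarrow> supported_on S (mat_mult S M N)"
  unfolding supported_on_def mat_mult_def by auto

lemma mat_mult_assoc: "mat_mult S (mat_mult S M N) P = mat_mult S M (mat_mult S N P)"
proof (intro ext)
  fix i l
  have "mat_mult S (mat_mult S M N) P i l = (\<Sum>j\<in>S. \<Sum>m\<in>S. M i m * N m j * P j l)"
    unfolding mat_mult_def by (simp add: sum_distrib_right)
  also have "\<dots> = (\<Sum>m\<in>S. \<Sum>j\<in>S. M i m * N m j * P j l)"
    by (rule sum.swap)
  also have "\<dots> = mat_mult S M (mat_mult S N P) i l"
    unfolding mat_mult_def by (simp add: sum_distrib_left mult.assoc)
  finally show "mat_mult S (mat_mult S M N) P i l = mat_mult S M (mat_mult S N P) i l" .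
qed

lemma mat_mult_transpose:
  "symmetric_mat M \<Longrightarrow> symmetric_mat N \<Longrightarrow> mat_mult S M N j l = mat_mult S N M l j"
  unfolding mat_mult_def symmetric_mat_def by (simp add: mult.commute)

lemma mat_vec_id_on: assumes "finite S" "j \<in> S" shows "mat_vec S (id_on S) z j = z j"
proof -
  have "mat_vec S (id_on S) z j = (\<Sum>l\<in>S. if l = j then z l else 0)"
    unfolding mat_vec_def id_on_def using assms(2) by (intro sum.cong) auto
  also have "\<dots> = z j" using assms by (simp add: sum.delta')
  finally show ?thesis .
qed

lemma mat_mult_id_on_left:
  assumes "finite S" "supported_on S M" shows "mat_mult S (id_on S) M = M"
proof (intro ext)
  fix i l
  show "mat_mult S (id_on S) M i l = M i l"
  proof (cases "i \<in> S")
    case True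
    then have "mat_mult S (id_on S) M i l = (\<Sum>j\<in>S. if j = i then M j l else 0)"
      unfolding mat_mult_def id_on_def by (intro sum.cong) auto
    also have "\<dots> = M i l" using True assms(1) by (simp add: sum.delta')
    finally show ?thesis .
  next
    case False
    then have "mat_mult S (id_on S) M i l = 0" by (simp add: mat_mult_def id_on_def)
    moreover have "M i l = 0" using False assms(2) by (simp add: supported_on_def)
    ultimately show ?thesis by simp
  qed
qed

lemma mat_mult_id_on_right:
  assumes "finite S" "supported_on S M" shows "mat_mult S M (id_on S) = M"
proof (intro ext)
  fix i l
  show "mat_mult S M (id_on S) i l = M i l"
  proof (cases "l \<in> S")
    case True
    then have "mat_mult S M (id_on S) i l = (\<Sum>j\<in>S. if j = l then M i j else 0)"
      unfolding mat_mult_def id_on_def by (intro sum.cong) auto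
    also have "\<dots> = M i l" using True assms(1) by (simp add: sum.delta')
    finally show ?thesis .
  next
    case False
    then have "mat_mult S M (id_on S) i l = 0" by (simp add: mat_mult_def id_on_def)
    moreover have "M i l = 0" using False assms(2) by (simp add: supported_on_def)
    ultimately show ?thesis by simp
  qed
qed

lemma mat_vec_mat_mult: "mat_vec S (mat_mult S M N) y = mat_vec S M (mat_vec S N y)"
proof (intro ext)
  fix i
  have "mat_vec S (mat_mult S M N) y i = (\<Sum>j\<in>S. \<Sum>m\<in>S. M i m * N m j * y j)"
    unfolding mat_mult_def mat_vec_def by (simp add: sum_distrib_right)
  also have "\<dots> = (\<Sum>m\<in>S. \<Sum>j\<in>S. M i m * N m j * y j)"
    by (rule sum.swap)
  also have "\<dots> = mat_vec S M (mat_vec S N y) i"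
    unfolding mat_vec_def by (simp add: sum_distrib_left mult.assoc)
  finally show "mat_vec S (mat_mult S M N) y i = mat_vec S M (mat_vec S N y) i" .
qed

lemma bilin_eq_sum_mat_vec: "bilin S M x y = (\<Sum>j\<in>S. x j * mat_vec S M y j)"
  unfolding bilin_def mat_vec_def by (simp add: sum_distrib_left mult.assoc)

lemma bilin_commute: "symmetric_mat M \<Longrightarrow> bilin S M x y = bilin S M y x"
  unfolding bilin_def symmetric_mat_def by (subst sum.swap) (simp add: mult_ac)

lemma bilin_eq_sum_mat_vec_left: "symmetric_mat M \<Longrightarrow> bilin S M x y = (\<Sum>l\<in>S. mat_vec S M x l * y l)"
  using bilin_eq_sum_mat_vec[of S M y x] bilin_commute[of M S x y] by (simp add: mult.commute)

lemma bilin_mat_mult: "bilin S (mat_mult S M N) x y = bilin S M x (mat_vec S N y)"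
  unfolding bilin_eq_sum_mat_vec mat_vec_mat_mult ..

lemma bilin_self_mat_vec:
  "symmetric_mat M \<Longrightarrow> bilin S M x (mat_vec S M x) = sq_norm S (mat_vec S M x)"
  unfolding bilin_eq_sum_mat_vec_left sq_norm_def by (simp add: power2_eq_square)

lemma bilin_scale_vectors: "bilin S M (\<lambda>j. a * x j) (\<lambda>j. b * y j) = a * b * bilin S M x y"
  unfolding bilin_def by (simp add: sum_distrib_left mult_ac)

lemma sq_norm_scale: "sq_norm S (\<lambda>j. a * x j) = a\<^sup>2 * sq_norm S x"
  unfolding sq_norm_def by (simp add: sum_distrib_left power_mult_distrib)

lemma sq_norm_nonneg: "sq_norm S x \<ge> 0"
  unfolding sq_norm_def by (simp add: sum_nonneg)

lemma sq_norm_eq_0_imp: "finite S \<Longrightarrow> sq_norm S x = 0 \<Longrightarrow> j \<in> S \<Longrightarrow> x j = 0"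
  unfolding sq_norm_def using sum_nonneg_eq_0_iff[of S "\<lambda>j. (x j)\<^sup>2"] by auto

lemma sq_le_sq_norm: "finite S \<Longrightarrow> j \<in> S \<Longrightarrow> (x j)\<^sup>2 \<le> sq_norm S x"
  unfolding sq_norm_def by (rule member_le_sum) auto

lemma bilin_id_on: assumes "finite S" shows "bilin S (id_on S) x x = sq_norm S x"
  using assms mat_vec_id_on[OF assms]
  unfolding bilin_eq_sum_mat_vec sq_norm_def by (simp add: power2_eq_square)

lemma bilin_diff: "bilin S (\<lambda>j l. M j l - N j l) x y = bilin S M x y - bilin S N x y"
  unfolding bilin_def by (simp add: algebra_simps sum_subtractf)

lemma bilin_smult: "bilin S (\<lambda>j l. a * M j l) x y = a * bilin S M x y"
  unfolding bilin_def by (simp add: sum_distrib_left mult_ac)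

lemma mat_mult_smult:
  "mat_mult S (\<lambda>j l. a * M j l) (\<lambda>j l. b * N j l) = (\<lambda>j l. a * b * mat_mult S M N j l)"
  unfolding mat_mult_def by (simp add: sum_distrib_left mult_ac)

lemma mat_mult_diff_left:
  "mat_mult S (\<lambda>j l. M j l - N j l) K = (\<lambda>j l. mat_mult S M K j l - mat_mult S N K j l)"
  unfolding mat_mult_def by (simp add: left_diff_distrib sum_subtractf)

lemma sq_norm_mat_vec_id_on: "finite S \<Longrightarrow> sq_norm S (mat_vec S (id_on S) z) = sq_norm S z"
  unfolding sq_norm_def by (simp add: mat_vec_id_on)

lemma bilin_add_scaled:
  "bilin S M (\<lambda>j. y j + t * w j) (\<lambda>j. y j + t * w j)
   = bilin S M y y + t * bilin S M y w + t * bilin S M w y + t\<^sup>2 * bilin S M w w"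
  unfolding bilin_def by (simp add: algebra_simps sum.distrib sum_distrib_left power2_eq_square)

lemma abs_bilin_le_sum_abs:
  assumes fin: "finite S"
  shows "\<bar>bilin S M z z\<bar> \<le> (\<Sum>j\<in>S. \<Sum>l\<in>S. \<bar>M j l\<bar>) * sq_norm S z"
proof -
  have "\<bar>z j * M j l * z l\<bar> \<le> \<bar>M j l\<bar> * sq_norm S z" if "j \<in> S" "l \<in> S" for j l
  proof -
    have "\<bar>z j\<bar> * \<bar>z l\<bar> \<le> ((z j)\<^sup>2 + (z l)\<^sup>2) / 2"
      using sum_squares_bound[of "\<bar>z j\<bar>" "\<bar>z l\<bar>"] by (simp add: power2_eq_square algebra_simps)
    also have "\<dots> \<le> (sq_norm S z + sq_norm S z) / 2"
      using sq_le_sq_norm[OF fin that(1), of z] sq_le_sq_norm[OF fin that(2), of z]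
      by (intro divide_right_mono add_mono) auto
    also have "\<dots> = sq_norm S z" by simp
    finally have "\<bar>z j\<bar> * \<bar>z l\<bar> * \<bar>M j l\<bar> \<le> sq_norm S z * \<bar>M j l\<bar>"
      by (rule mult_right_mono) simp
    then show ?thesis by (simp add: abs_mult mult_ac)
  qed
  then have "\<bar>bilin S M z z\<bar> \<le> (\<Sum>j\<in>S. \<Sum>l\<in>S. \<bar>M j l\<bar> * sq_norm S z)"
    unfolding bilin_def by (intro order_trans[OF sum_abs] sum_mono order_trans[OF sum_abs]) auto
  then show ?thesis by (simp add: sum_distrib_right)
qed

lemma norm_2_1_le:
  assumes "\<And>z. sq_norm S z \<le> 1 \<Longrightarrow> (\<Sum>i\<in>I. \<bar>mat_vec S M z i\<bar>) \<le> c"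
  shows "norm_2_1 I S M \<le> c"
  unfolding norm_2_1_def
proof (rule cSup_least)
  show "{\<Sum>i\<in>I. \<bar>\<Sum>j\<in>S. M i j * z j\<bar> |z. (\<Sum>j\<in>S. (z j)\<^sup>2) \<le> 1} \<noteq> {}"
    by (auto intro!: exI[of _ "\<lambda>_. 0"])
qed (use assms in \<open>auto simp: sq_norm_def mat_vec_def\<close>)

lemma bilin_polarization_bound:
  assumes sym: "symmetric_mat M" and bound: "\<And>x. \<bar>bilin S M x x\<bar> \<le> t * sq_norm S x"
  shows "\<bar>bilin S M x y\<bar> \<le> t * (sq_norm S x + sq_norm S y) / 2"
proof -
  let ?p = "\<lambda>j. x j + y j" and ?m = "\<lambda>j. x j - y j"
  have "4 * bilin S M x y = bilin S M ?p ?p - bilin S M ?m ?m"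
    using bilin_commute[OF sym, of S y x] unfolding bilin_def
    by (simp add: algebra_simps sum.distrib sum_subtractf sum_distrib_left)
  then have "\<bar>4 * bilin S M x y\<bar> \<le> \<bar>bilin S M ?p ?p\<bar> + \<bar>bilin S M ?m ?m\<bar>"
    by (simp only: abs_triangle_ineq4)
  also have "\<dots> \<le> t * sq_norm S ?p + t * sq_norm S ?m"
    by (intro add_mono bound)
  also have "\<dots> = 2 * t * (sq_norm S x + sq_norm S y)"
    unfolding sq_norm_def
    by (simp add: power2_eq_square algebra_simps sum.distrib sum_subtractf sum_distrib_left)
  finally show ?thesis by simp
qed

section \<open>Powers of a symmetric contraction\<close>

context
  fixes S X
  assumes fin: "finite S" and supp_X: "supported_on S X" and sym_X: "symmetric_mat X"
begin

lemma supported_on_mat_pow: "supported_on S (mat_pow S X n)"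
  by (induct n) (auto intro: supported_on_mat_mult supported_on_id_on supp_X)

lemma mat_pow_commute: "mat_mult S (mat_pow S X n) X = mat_mult S X (mat_pow S X n)"
  by (induct n) (simp_all add: mat_mult_id_on_left mat_mult_id_on_right fin supp_X mat_mult_assoc)

lemma symmetric_mat_pow: "symmetric_mat (mat_pow S X n)"
proof (induct n)
  case (Suc n)
  show ?case unfolding symmetric_mat_def
  proof (intro allI)
    fix j l
    have "mat_pow S X (Suc n) j l = mat_mult S (mat_pow S X n) X l j"
      using mat_mult_transpose[OF sym_X Suc] by simp
    also have "\<dots> = mat_pow S X (Suc n) l j" by (simp add: mat_pow_commute)
    finally show "mat_pow S X (Suc n) j l = mat_pow S X (Suc n) l j" .
  qed
qed (simp add: symmetric_mat_id_on)

lemma mat_pow_add: "mat_mult S (mat_pow S X m) (mat_pow S X n) = mat_pow S X (m + n)"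
  by (induct m) (simp_all add: mat_mult_id_on_left fin supported_on_mat_pow mat_mult_assoc)

lemma bilin_mat_pow_Suc_Suc:
  "bilin S (mat_pow S X (Suc (Suc n))) x x
   = bilin S (mat_pow S X n) (mat_vec S X x) (mat_vec S X x)"
proof -
  have "mat_pow S X (Suc (Suc n)) = mat_mult S X (mat_mult S (mat_pow S X n) X)"
    by (simp add: mat_pow_commute)
  then have "bilin S (mat_pow S X (Suc (Suc n))) x x
      = bilin S X x (mat_vec S (mat_pow S X n) (mat_vec S X x))"
    by (simp add: bilin_mat_mult mat_vec_mat_mult)
  also have "\<dots> = bilin S (mat_pow S X n) (mat_vec S X x) (mat_vec S X x)"
    unfolding bilin_eq_sum_mat_vec_left[OF sym_X] by (simp add: bilin_eq_sum_mat_vec)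
  finally show ?thesis .
qed

end

context
  fixes S X \<theta>
  assumes fin: "finite S" and supp_X: "supported_on S X" and sym_X: "symmetric_mat X"
    and \<theta>_nonneg: "\<theta> \<ge> 0" and quad_X: "\<And>x. \<bar>bilin S X x x\<bar> \<le> \<theta> * sq_norm S x"
begin

lemma sq_norm_mat_vec_le: "sq_norm S (mat_vec S X x) \<le> \<theta>\<^sup>2 * sq_norm S x"
proof -
  define Y where "Y = sq_norm S (mat_vec S X x)"
  define N where "N = sq_norm S x"
  have "Y \<ge> 0" "N \<ge> 0" unfolding Y_def N_def by (simp_all add: sq_norm_nonneg)
  show ?thesis
  proof (cases "Y = 0 \<or> N = 0")
    case True
    moreover have "Y = 0" if "N = 0"
    proof -
      have "\<forall>j\<in>S. x j = 0" using that sq_norm_eq_0_imp[OF fin] unfolding N_def by blast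
      then show ?thesis unfolding Y_def sq_norm_def mat_vec_def by simp
    qed
    ultimately show ?thesis using \<open>N \<ge> 0\<close> \<theta>_nonneg unfolding Y_def N_def by auto
  next
    case False
    with \<open>Y \<ge> 0\<close> \<open>N \<ge> 0\<close> have "Y > 0" "N > 0" by auto
    text \<open>Polarize with the two vectors rescaled to equal length.\<close>
    define s where "s = sqrt (sqrt Y / sqrt N)"
    have "s > 0" and s2: "s\<^sup>2 = sqrt Y / sqrt N"
      unfolding s_def using \<open>Y > 0\<close> \<open>N > 0\<close> by simp_all
    have "Y = bilin S X (\<lambda>j. s * x j) (\<lambda>j. (1 / s) * mat_vec S X x j)"
      unfolding bilin_scale_vectors Y_def bilin_self_mat_vec[OF sym_X] using \<open>s > 0\<close> by simp
    also have "\<dots> \<le> \<theta> * (sq_norm S (\<lambda>j. s * x j) + sq_norm S (\<lambda>j. (1 / s) * mat_vec S X x j)) / 2"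
      using bilin_polarization_bound[OF sym_X quad_X] by (rule abs_le_D1)
    also have "\<dots> = \<theta> * (s\<^sup>2 * N + Y / s\<^sup>2) / 2"
      unfolding sq_norm_scale N_def Y_def by (simp add: power_divide)
    also have "\<dots> = \<theta> * (sqrt Y * sqrt N)"
    proof -
      have "s\<^sup>2 * N = sqrt Y * sqrt N" and "Y / s\<^sup>2 = sqrt Y * sqrt N"
        unfolding s2 using \<open>Y > 0\<close> \<open>N > 0\<close> by (simp_all add: field_simps)
      then show ?thesis by simp
    qed
    finally have "sqrt Y * sqrt Y \<le> (\<theta> * sqrt N) * sqrt Y"
      using \<open>Y > 0\<close> by (simp only: real_sqrt_mult_self) (simp add: mult_ac)
    then have "sqrt Y \<le> \<theta> * sqrt N"
      using real_sqrt_gt_zero[OF \<open>Y > 0\<close>] by (rule mult_right_le_imp_le)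
    then have "(sqrt Y)\<^sup>2 \<le> (\<theta> * sqrt N)\<^sup>2"
      using \<open>Y > 0\<close> by (intro power_mono) auto
    then show ?thesis using \<open>Y > 0\<close> \<open>N > 0\<close>
      unfolding Y_def N_def by (simp add: power_mult_distrib)
  qed
qed

lemma quad_mat_pow_bound: "\<bar>bilin S (mat_pow S X n) x x\<bar> \<le> \<theta> ^ n * sq_norm S x"
proof (induct n arbitrary: x rule: less_induct)
  case (less n)
  consider "n = 0" | "n = 1" | m where "n = Suc (Suc m)"
    by (metis One_nat_def not0_implies_Suc)
  then show ?case
  proof cases
    case 1
    then show ?thesis by (simp add: bilin_id_on fin sq_norm_nonneg)
  next
    case 2
    then show ?thesis using quad_X by (simp add: mat_mult_id_on_right fin supp_X)
  next
    case (3 m)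
    have "\<bar>bilin S (mat_pow S X n) x x\<bar>
        = \<bar>bilin S (mat_pow S X m) (mat_vec S X x) (mat_vec S X x)\<bar>"
      using 3 bilin_mat_pow_Suc_Suc[OF fin supp_X sym_X] by simp
    also have "\<dots> \<le> \<theta> ^ m * sq_norm S (mat_vec S X x)"
      using less 3 by simp
    also have "\<dots> \<le> \<theta> ^ m * (\<theta>\<^sup>2 * sq_norm S x)"
      using sq_norm_mat_vec_le \<theta>_nonneg by (intro mult_left_mono) auto
    finally show ?thesis using 3 by (simp add: power2_eq_square mult_ac)
  qed
qed

lemma mat_pow_entry_bound: "\<bar>mat_pow S X n i j\<bar> \<le> \<theta> ^ n"
proof (cases "i \<in> S \<and> j \<in> S")
  case True
  define e :: "nat \<Rightarrow> nat \<Rightarrow> real" where "e = (\<lambda>a m. if m = a then 1 else 0)"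
  have unit: "sq_norm S (e a) = 1" if "a \<in> S" for a
  proof -
    have "sq_norm S (e a) = (\<Sum>m\<in>S. if m = a then 1 else 0)"
      unfolding sq_norm_def e_def by (intro sum.cong) auto
    with that fin show ?thesis by simp
  qed
  have "bilin S (mat_pow S X n) (e i) (e j) = mat_pow S X n i j"
  proof -
    have l: "(if P then 1 else 0) * z = (if P then z else 0)"
      and r: "z * (if P then 1 else 0) = (if P then z else 0)" for P and z :: real
      by simp_all
    show ?thesis unfolding bilin_def e_def l r using True fin by (simp add: sum.delta')
  qed
  moreover have "\<bar>bilin S (mat_pow S X n) (e i) (e j)\<bar>
      \<le> \<theta> ^ n * (sq_norm S (e i) + sq_norm S (e j)) / 2"
    by (rule bilin_polarization_bound[OF symmetric_mat_pow[OF fin supp_X sym_X] quad_mat_pow_bound])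
  ultimately show ?thesis using unit True by simp
next
  case False
  then have "mat_pow S X n i j = 0"
    using supported_on_mat_pow[OF fin supp_X sym_X] unfolding supported_on_def by auto
  then show ?thesis using \<theta>_nonneg by simp
qed

end

section \<open>The binomial series of a symmetric contraction\<close>

lemma gbinomial_Suc_eq_mult: "(a gchoose Suc k) = (a - real k) / (real k + 1) * (a gchoose k)"
proof -
  have "real (Suc k) * (a gchoose Suc k) = (a - real k) * (a gchoose k)"
    using gbinomial_mult_1[of a k] by (simp add: algebra_simps)
  then show ?thesis by (simp add: field_simps)
qed

lemma abs_gbinomial_le_1: "\<bar>a\<bar> \<le> 1 \<Longrightarrow> \<bar>(a :: real) gchoose n\<bar> \<le> 1"
proof (induct n)
  case (Suc n)
  have "\<bar>(a - real n) / (real n + 1)\<bar> \<le> 1"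
    using Suc.prems by (simp add: abs_le_iff field_simps)
  then have "\<bar>(a - real n) / (real n + 1)\<bar> * \<bar>a gchoose n\<bar> \<le> 1 * 1"
    using Suc by (intro mult_mono) auto
  then show ?case by (simp add: gbinomial_Suc_eq_mult abs_mult)
qed simp

lemma gbinomial_one_left: "(1 :: real) gchoose n = (if n \<le> 1 then 1 else 0)"
proof (cases n)
  case (Suc k)
  have "((0 :: real) + 1) gchoose Suc k = (0 gchoose k) + (0 gchoose Suc k)"
    by (rule gbinomial_Suc_Suc)
  with Suc show ?thesis by (cases k) auto
qed simp

lemma gbinomial_half_alternating: "n \<ge> 1 \<Longrightarrow> ((1/2 :: real) gchoose n) * (-1) ^ n \<le> 0"
proof (induct n rule: dec_induct)
  case (step n)
  have eq: "((1/2 :: real) gchoose Suc n) * (-1) ^ Suc n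
      = ((real n - 1/2) / (real n + 1)) * (((1/2) gchoose n) * (-1) ^ n)"
    by (simp add: gbinomial_Suc_eq_mult field_simps)
  have "(real n - 1/2) / (real n + 1) \<ge> 0" using step(1) by simp
  then show ?case unfolding eq using step(3) by (rule mult_nonneg_nonpos)
qed simp

lemma gbinomial_half_term_le:
  assumes "n \<ge> 1" and "\<bar>b\<bar> \<le> \<theta> ^ n * N"
  shows "((1/2 :: real) gchoose n) * (-\<theta>) ^ n * N \<le> ((1/2) gchoose n) * b"
proof -
  define g where "g = ((1/2 :: real) gchoose n) * (-1) ^ n"
  have "((1/2) gchoose n) * b - ((1/2) gchoose n) * (-\<theta>) ^ n * N
      = g * ((-1) ^ n * b - \<theta> ^ n * N)"
    unfolding g_def power_minus[of \<theta>]
    by (simp add: algebra_simps flip: power_mult_distrib)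
  moreover have "(-1) ^ n * b \<le> \<theta> ^ n * N"
    using assms(2) abs_ge_self[of "(-1) ^ n * b"] by (simp add: abs_mult power_abs)
  ultimately show ?thesis
    using gbinomial_half_alternating[OF assms(1)] unfolding g_def
    by (smt (verit) mult_nonpos_nonpos)
qed

definition binomial_series :: "nat set \<Rightarrow> (nat \<Rightarrow> nat \<Rightarrow> real) \<Rightarrow> real \<Rightarrow> nat \<Rightarrow> nat \<Rightarrow> real" where
  "binomial_series S X a = (\<lambda>i j. \<Sum>n. (a gchoose n) * mat_pow S X n i j)"

context
  fixes S X \<theta>
  assumes fin: "finite S" and supp_X: "supported_on S X" and sym_X: "symmetric_mat X"
    and \<theta>_nonneg: "\<theta> \<ge> 0" and \<theta>_less_1: "\<theta> < 1"
    and quad_X: "\<And>x. \<bar>bilin S X x x\<bar> \<le> \<theta> * sq_norm S x"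
begin

lemma binomial_series_summable_abs:
  assumes "\<bar>a\<bar> \<le> 1"
  shows "summable (\<lambda>n. norm ((a gchoose n) * mat_pow S X n i j))"
proof (rule summable_comparison_test)
  show "\<exists>N. \<forall>n\<ge>N. norm (norm ((a gchoose n) * mat_pow S X n i j)) \<le> \<theta> ^ n"
  proof (intro exI allI impI)
    fix n
    have "\<bar>a gchoose n\<bar> * \<bar>mat_pow S X n i j\<bar> \<le> 1 * \<theta> ^ n"
      using abs_gbinomial_le_1[OF assms] mat_pow_entry_bound[OF fin supp_X sym_X \<theta>_nonneg quad_X]
      by (intro mult_mono) auto
    then show "norm (norm ((a gchoose n) * mat_pow S X n i j)) \<le> \<theta> ^ n"
      by (simp add: abs_mult)
  qed
  show "summable (\<lambda>n. \<theta> ^ n)" using \<theta>_nonneg \<theta>_less_1 by (simp add: summable_geometric)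
qed

lemma binomial_series_sums:
  "\<bar>a\<bar> \<le> 1 \<Longrightarrow> (\<lambda>n. (a gchoose n) * mat_pow S X n i j) sums binomial_series S X a i j"
  unfolding binomial_series_def
  using summable_norm_cancel[OF binomial_series_summable_abs] by (simp add: summable_sums)

lemma mat_pow_Cauchy_product_coeff:
  "(\<Sum>j\<in>S. \<Sum>m\<le>k. ((a gchoose m) * mat_pow S X m i j) * ((b gchoose (k - m)) * mat_pow S X (k - m) j l))
   = ((a + b) gchoose k) * mat_pow S X k i l"
proof -
  have "(\<Sum>j\<in>S. \<Sum>m\<le>k. ((a gchoose m) * mat_pow S X m i j) * ((b gchoose (k - m)) * mat_pow S X (k - m) j l))
      = (\<Sum>m\<le>k. (a gchoose m) * (b gchoose (k - m)) * mat_mult S (mat_pow S X m) (mat_pow S X (k - m)) i l)"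
    unfolding mat_mult_def sum_distrib_left by (subst sum.swap) (simp add: mult_ac)
  also have "\<dots> = (\<Sum>m\<le>k. (a gchoose m) * (b gchoose (k - m))) * mat_pow S X k i l"
    by (simp add: mat_pow_add[OF fin supp_X sym_X] sum_distrib_right)
  also have "\<dots> = ((a + b) gchoose k) * mat_pow S X k i l"
    by (simp add: gbinomial_Vandermonde atMost_atLeast0)
  finally show ?thesis .
qed

lemma binomial_series_add:
  assumes a: "\<bar>a\<bar> \<le> 1" and b: "\<bar>b\<bar> \<le> 1" and ab: "\<bar>a + b\<bar> \<le> 1"
  shows "mat_mult S (binomial_series S X a) (binomial_series S X b) = binomial_series S X (a + b)"
proof (intro ext)
  fix i l
  have "(\<lambda>k. \<Sum>m\<le>k. ((a gchoose m) * mat_pow S X m i j) * ((b gchoose (k - m)) * mat_pow S X (k - m) j l))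
      sums (binomial_series S X a i j * binomial_series S X b j l)" for j
    unfolding binomial_series_def
    by (rule Cauchy_product_sums[OF binomial_series_summable_abs[OF a] binomial_series_summable_abs[OF b]])
  then have "(\<lambda>k. ((a + b) gchoose k) * mat_pow S X k i l)
      sums mat_mult S (binomial_series S X a) (binomial_series S X b) i l"
    unfolding mat_mult_def mat_pow_Cauchy_product_coeff[symmetric] by (rule sums_sum)
  with binomial_series_sums[OF ab]
  show "mat_mult S (binomial_series S X a) (binomial_series S X b) i l = binomial_series S X (a + b) i l"
    using sums_unique2 by blast
qed

lemma binomial_series_0: "binomial_series S X 0 = id_on S"
proof (intro ext)
  fix i j
  have "binomial_series S X 0 i j = (\<Sum>n\<in>{0}. (0 gchoose n) * mat_pow S X n i j)"
    unfolding binomial_series_def by (rule suminf_finite) (auto simp: gbinomial_0_left)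
  then show "binomial_series S X 0 i j = id_on S i j" by simp
qed

lemma binomial_series_1: "binomial_series S X 1 i j = id_on S i j + X i j"
proof -
  have "binomial_series S X 1 i j = (\<Sum>n\<in>{0, 1}. (1 gchoose n) * mat_pow S X n i j)"
    unfolding binomial_series_def by (rule suminf_finite) (auto simp: gbinomial_one_left)
  then show ?thesis by (simp add: mat_mult_id_on_right[OF fin supp_X])
qed

lemma symmetric_binomial_series: "symmetric_mat (binomial_series S X a)"
  using symmetric_mat_pow[OF fin supp_X sym_X]
  unfolding symmetric_mat_def binomial_series_def by simp

lemma supported_on_binomial_series: "supported_on S (binomial_series S X a)"
  using supported_on_mat_pow[OF fin supp_X sym_X]
  unfolding supported_on_def binomial_series_def by simp

lemma bilin_binomial_series_sums:
  assumes "\<bar>a\<bar> \<le> 1"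
  shows "(\<lambda>n. (a gchoose n) * bilin S (mat_pow S X n) x y) sums bilin S (binomial_series S X a) x y"
proof -
  have "(\<lambda>n. \<Sum>j\<in>S. \<Sum>l\<in>S. x j * ((a gchoose n) * mat_pow S X n j l) * y l)
      sums bilin S (binomial_series S X a) x y"
    unfolding bilin_def
    by (rule sums_sum, rule sums_sum, rule sums_mult2, rule sums_mult, rule binomial_series_sums[OF assms])
  then show ?thesis unfolding bilin_def by (simp add: sum_distrib_left mult_ac)
qed

text \<open>Termwise comparison with the scalar series of \<open>(1 - \<theta>) powr (1/2)\<close>.\<close>

lemma bilin_binomial_series_half_lower:
  "(1 - \<theta>) powr (1/2) * sq_norm S x \<le> bilin S (binomial_series S X (1/2)) x x"
proof -
  let ?N = "sq_norm S x"
  have scalar: "(\<lambda>n. ((1/2) gchoose n) * (-\<theta>) ^ n * ?N) sums ((1 - \<theta>) powr (1/2) * ?N)"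
    using sums_mult2[OF gen_binomial_real[of "-\<theta>" "1/2"], of ?N] \<theta>_nonneg \<theta>_less_1 by simp
  have matrix: "(\<lambda>n. ((1/2) gchoose n) * bilin S (mat_pow S X n) x x)
      sums bilin S (binomial_series S X (1/2)) x x"
    by (rule bilin_binomial_series_sums) simp
  have "((1/2) gchoose n) * (-\<theta>) ^ n * ?N \<le> ((1/2) gchoose n) * bilin S (mat_pow S X n) x x"
    for n
  proof (cases "n = 0")
    case False
    then show ?thesis
      by (intro gbinomial_half_term_le quad_mat_pow_bound[OF fin supp_X sym_X \<theta>_nonneg quad_X]) simp
  qed (simp add: bilin_id_on fin)
  from sums_le[OF this scalar matrix] show ?thesis .
qed

lemma bilin_binomial_series_half_nonneg: "bilin S (binomial_series S X (1/2)) x x \<ge> 0"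
  using bilin_binomial_series_half_lower[of x] sq_norm_nonneg[of S x]
  by (meson order_trans mult_nonneg_nonneg powr_ge_zero)

lemma binomial_series_half_square:
  "mat_mult S (binomial_series S X (1/2)) (binomial_series S X (1/2)) = (\<lambda>j l. id_on S j l + X j l)"
  using binomial_series_add[of "1/2" "1/2"] binomial_series_1 by auto

lemma binomial_series_half_inverse:
  "mat_mult S (binomial_series S X (1/2)) (binomial_series S X (-1/2)) = id_on S"
  "mat_mult S (binomial_series S X (-1/2)) (binomial_series S X (1/2)) = id_on S"
  using binomial_series_add[of "1/2" "-1/2"] binomial_series_add[of "-1/2" "1/2"] binomial_series_0
  by simp_all

end

section \<open>Positive semidefinite square roots\<close>

lemma psd_mat_vec_eq_0:
  assumes fin: "finite S" and sym: "symmetric_mat M" and psd: "\<And>z. bilin S M z z \<ge> 0"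
    and null: "bilin S M y y = 0" and "a \<in> S"
  shows "mat_vec S M y a = 0"
proof -
  define w where "w = mat_vec S M y"
  define W where "W = sq_norm S w"
  define c where "c = bilin S M w w"
  have "c \<ge> 0" "W \<ge> 0" unfolding c_def W_def by (simp_all add: psd sq_norm_nonneg)
  have yw: "bilin S M y w = W" and wy: "bilin S M w y = W"
    unfolding W_def w_def using bilin_self_mat_vec[OF sym] bilin_commute[OF sym] by metis+
  text \<open>Nonnegativity of the form along the line \<open>y + t w\<close> forces \<open>W = 0\<close>.\<close>
  define t where "t = - W / (c + 1)"
  have "0 \<le> bilin S M (\<lambda>j. y j + t * w j) (\<lambda>j. y j + t * w j)" by (rule psd)
  also have "\<dots> = 2 * t * W + t\<^sup>2 * c"
    unfolding bilin_add_scaled null yw wy c_def by simp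
  finally have "0 \<le> (c + 1)\<^sup>2 * (2 * t * W + t\<^sup>2 * c)" by simp
  also have "(c + 1)\<^sup>2 * (2 * t * W + t\<^sup>2 * c) = 2 * (t * (c + 1)) * W * (c + 1) + (t * (c + 1))\<^sup>2 * c"
    by (simp add: power2_eq_square algebra_simps)
  also have "t * (c + 1) = - W" unfolding t_def using \<open>c \<ge> 0\<close> by simp
  finally have "W\<^sup>2 * (c + 2) \<le> 0" by (simp add: power2_eq_square algebra_simps)
  then have "W = 0" using \<open>c \<ge> 0\<close> by (simp add: mult_le_0_iff)
  then show ?thesis using sq_norm_eq_0_imp[OF fin _ \<open>a \<in> S\<close>] unfolding W_def w_def by blast
qed

definition trace_on :: "nat set \<Rightarrow> (nat \<Rightarrow> nat \<Rightarrow> real) \<Rightarrow> real" where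
  "trace_on S M = (\<Sum>j\<in>S. M j j)"

lemma trace_on_mat_mult_commute: "trace_on S (mat_mult S M N) = trace_on S (mat_mult S N M)"
  unfolding trace_on_def mat_mult_def by (subst sum.swap) (simp add: mult.commute)

lemma trace_on_mat_mult_add:
  "trace_on S (mat_mult S D M) + trace_on S (mat_mult S D N)
   = trace_on S (mat_mult S D (\<lambda>j l. M j l + N j l))"
  unfolding trace_on_def mat_mult_def by (simp add: sum.distrib[symmetric] distrib_left)

lemma trace_on_congruence:
  assumes "symmetric_mat D"
  shows "trace_on S (mat_mult S D (mat_mult S M D)) = (\<Sum>j\<in>S. bilin S M (\<lambda>a. D a j) (\<lambda>a. D a j))"
  using assms unfolding trace_on_def mat_mult_def bilin_def symmetric_mat_def
  by (simp add: sum_distrib_left mult_ac)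

lemma mat_mult_psd_eq_0_of_trace:
  assumes fin: "finite S" and sym_M: "symmetric_mat M" and psd: "\<And>z. bilin S M z z \<ge> 0"
    and sym_D: "symmetric_mat D" and trace: "trace_on S (mat_mult S D (mat_mult S M D)) = 0"
    and "a \<in> S" "j \<in> S"
  shows "mat_mult S M D a j = 0"
proof -
  have "bilin S M (\<lambda>a. D a j) (\<lambda>a. D a j) = 0"
    using trace \<open>j \<in> S\<close> fin psd sum_nonneg_eq_0_iff[of S "\<lambda>j. bilin S M (\<lambda>a. D a j) (\<lambda>a. D a j)"]
    unfolding trace_on_congruence[OF sym_D] by blast
  from psd_mat_vec_eq_0[OF fin sym_M psd this \<open>a \<in> S\<close>] show ?thesis
    unfolding mat_vec_def mat_mult_def .
qed

text \<open>If \<open>P\<^sup>2 = P'\<^sup>2\<close> then \<open>D = P - P'\<close> satisfies \<open>P D + D P' = 0\<close>, so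
  \<open>tr (D P D) + tr (D P' D) = 0\<close> with both traces nonnegative; hence \<open>P D = P' D = 0\<close>,
  so \<open>D\<^sup>2 = 0\<close> and the symmetric \<open>D\<close> vanishes.\<close>

lemma psd_sqrt_unique:
  assumes fin: "finite S"
    and supp: "supported_on S P" "supported_on S P'"
    and sym: "symmetric_mat P" "symmetric_mat P'"
    and psd: "\<And>z. bilin S P z z \<ge> 0" "\<And>z. bilin S P' z z \<ge> 0"
    and sq: "mat_mult S P P = mat_mult S P' P'"
  shows "P = P'"
proof -
  define D where "D = (\<lambda>j l. P j l - P' j l)"
  have sym_D: "symmetric_mat D" using sym unfolding D_def symmetric_mat_def by simp
  have "mat_mult S P D j l + mat_mult S D P' j l = 0" for j l
    using fun_cong[OF fun_cong[OF sq, of j], of l]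
    unfolding mat_mult_def D_def by (simp add: algebra_simps sum_subtractf)
  then have "trace_on S (mat_mult S D (mat_mult S P D)) + trace_on S (mat_mult S D (mat_mult S D P')) = 0"
    unfolding trace_on_mat_mult_add by (simp add: mat_mult_def trace_on_def)
  moreover have "trace_on S (mat_mult S D (mat_mult S D P')) = trace_on S (mat_mult S D (mat_mult S P' D))"
    by (metis trace_on_mat_mult_commute mat_mult_assoc)
  moreover have "trace_on S (mat_mult S D (mat_mult S Q D)) \<ge> 0" if "\<And>z. bilin S Q z z \<ge> 0" for Q
    unfolding trace_on_congruence[OF sym_D] using that by (simp add: sum_nonneg)
  ultimately have "trace_on S (mat_mult S D (mat_mult S P D)) = 0"
    and "trace_on S (mat_mult S D (mat_mult S P' D)) = 0"
    using psd by (smt (verit))+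
  then have "mat_mult S P D a j = 0" "mat_mult S P' D a j = 0" if "a \<in> S" "j \<in> S" for a j
    using mat_mult_psd_eq_0_of_trace[OF fin sym(1) psd(1) sym_D]
      mat_mult_psd_eq_0_of_trace[OF fin sym(2) psd(2) sym_D] that by blast+
  moreover have "(\<Sum>a\<in>S. (D a j)\<^sup>2) = mat_mult S P D j j - mat_mult S P' D j j" for j
  proof -
    have "(\<Sum>a\<in>S. (D a j)\<^sup>2) = mat_mult S D D j j"
      using sym_D unfolding mat_mult_def symmetric_mat_def by (simp add: power2_eq_square)
    then show ?thesis using mat_mult_diff_left[of S P P' D] unfolding D_def[symmetric] by simp
  qed
  ultimately have "(\<Sum>a\<in>S. (D a j)\<^sup>2) = 0" if "j \<in> S" for j
    using that by simp
  then have "D a j = 0" if "a \<in> S" "j \<in> S" for a j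
    using that fin sum_nonneg_eq_0_iff[of S "\<lambda>a. (D a j)\<^sup>2"] by simp
  with supp show ?thesis
    unfolding D_def by (intro supported_on_ext) auto
qed

lemma mat_sqrt_on_eqI:
  assumes fin: "finite S" and supp: "supported_on S P" and sym: "symmetric_mat P"
    and psd: "\<And>z. bilin S P z z \<ge> 0" and sq: "mat_mult S P P = Q"
  shows "mat_sqrt_on S Q = P"
  unfolding mat_sqrt_on_def
proof (rule the_equality)
  show "supported_on S P \<and> pos_semidef_on S P \<and> (\<forall>j\<in>S. \<forall>l\<in>S. mat_mult S P P j l = Q j l)"
    using supp sym psd sq
    unfolding pos_semidef_on_def symmetric_on_def quad_form_eq_bilin symmetric_mat_def by auto
next
  fix P'
  assume P': "supported_on S P' \<and> pos_semidef_on S P' \<and> (\<forall>j\<in>S. \<forall>l\<in>S. mat_mult S P' P' j l = Q j l)"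
  then have "mat_mult S P' P' = mat_mult S P P"
    using sq by (intro supported_on_ext[OF supported_on_mat_mult supported_on_mat_mult] supp) auto
  with P' show "P' = P"
    using psd_sqrt_unique[OF fin _ supp _ sym _ psd] symmetric_matI
    unfolding pos_semidef_on_def quad_form_eq_bilin by blast
qed

lemma mat_inv_on_eqI:
  assumes fin: "finite S" and supp: "supported_on S M" "supported_on S N"
    and inv: "mat_mult S M N = id_on S" "mat_mult S N M = id_on S"
  shows "mat_inv_on S M = N"
  unfolding mat_inv_on_def
proof (rule the_equality)
  fix N'
  assume N': "supported_on S N' \<and> (\<forall>j\<in>S. \<forall>l\<in>S. mat_mult S N' M j l = id_on S j l
                                             \<and> mat_mult S M N' j l = id_on S j l)"
  then have "mat_mult S N' M = id_on S"
    by (intro supported_on_ext[OF supported_on_mat_mult supported_on_id_on] supp) auto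
  have "N' = mat_mult S N' (mat_mult S M N)"
    using N' fin by (simp add: inv mat_mult_id_on_right)
  also have "\<dots> = N"
    using fin supp by (simp flip: mat_mult_assoc add: \<open>mat_mult S N' M = id_on S\<close> mat_mult_id_on_left)
  finally show "N' = N" .
qed (use supp inv in simp)

lemma abs_shifted_form_le:
  fixes B N K e :: real
  assumes "0 \<le> K" "0 < e" "0 \<le> N" "e * N \<le> B" "B \<le> K * N"
  shows "\<bar>B / (K + e) - N\<bar> \<le> K / (K + e) * N"
proof -
  have "K + e > 0" using assms by simp
  have "B - (K + e) * N = B - K * N - e * N" by (simp add: algebra_simps)
  moreover have "0 \<le> K * N" "0 \<le> e * N" using assms by simp_all
  ultimately have "\<bar>B - (K + e) * N\<bar> \<le> K * N"
    using assms(4,5) unfolding abs_le_iff by linarith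
  then have "\<bar>B - (K + e) * N\<bar> / (K + e) \<le> K * N / (K + e)"
    using \<open>K + e > 0\<close> by (simp add: divide_right_mono)
  moreover have "B / (K + e) - N = (B - (K + e) * N) / (K + e)"
    using \<open>K + e > 0\<close> by (simp add: field_simps)
  ultimately show ?thesis using \<open>K + e > 0\<close> by (simp add: abs_divide)
qed

lemma rescaled_contraction:
  assumes fin: "finite S" and "0 < e" "0 \<le> K"
    and lower: "\<And>z. e * sq_norm S z \<le> bilin S Q z z"
    and upper: "\<And>z. bilin S Q z z \<le> K * sq_norm S z"
  shows "\<bar>bilin S (\<lambda>j l. 1 / (K + e) * Q j l - id_on S j l) z z\<bar> \<le> K / (K + e) * sq_norm S z"
  unfolding bilin_diff bilin_smult bilin_id_on[OF fin]
  using abs_shifted_form_le[OF assms(3,2) sq_norm_nonneg lower upper] by simp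

lemma pos_def_sqrt_exists:
  assumes fin: "finite S" and supp: "supported_on S Q" and sym: "symmetric_mat Q"
    and "e > 0" and lower: "\<And>z. e * sq_norm S z \<le> bilin S Q z z"
  obtains P P' where "supported_on S P" "supported_on S P'" "symmetric_mat P"
    "\<And>z. bilin S P z z \<ge> 0" "mat_mult S P P = Q"
    "mat_mult S P P' = id_on S" "mat_mult S P' P = id_on S"
proof -
  \<comment> \<open>\<open>K\<close> bounds the form of \<open>Q\<close> from above, which makes \<open>X\<close> a contraction.\<close>
  define K where "K = (\<Sum>j\<in>S. \<Sum>l\<in>S. \<bar>Q j l\<bar>)"
  define X where "X = (\<lambda>j l. 1 / (K + e) * Q j l - id_on S j l)"
  have "K \<ge> 0" unfolding K_def by (simp add: sum_nonneg)
  then have "K + e > 0" and \<theta>: "0 \<le> K / (K + e)" "K / (K + e) < 1"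
    using \<open>e > 0\<close> by simp_all
  have supp_X: "supported_on S X"
    using supp unfolding X_def supported_on_def id_on_def by auto
  have sym_X: "symmetric_mat X"
    using sym unfolding X_def symmetric_mat_def id_on_def by auto
  have "bilin S Q z z \<le> K * sq_norm S z" for z
    using abs_bilin_le_sum_abs[OF fin, of Q z] unfolding K_def by simp
  then have quad_X: "\<bar>bilin S X z z\<bar> \<le> K / (K + e) * sq_norm S z" for z
    unfolding X_def using rescaled_contraction[OF fin \<open>e > 0\<close> \<open>K \<ge> 0\<close> lower] by blast
  let ?F = "binomial_series S X"
  note F = binomial_series_half_square[OF fin supp_X sym_X \<theta> quad_X]
    binomial_series_half_inverse[OF fin supp_X sym_X \<theta> quad_X]
    symmetric_binomial_series[OF fin supp_X sym_X \<theta> quad_X]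
    supported_on_binomial_series[OF fin supp_X sym_X \<theta> quad_X]
    bilin_binomial_series_half_nonneg[OF fin supp_X sym_X \<theta> quad_X]
  show thesis
  proof
    let ?P = "\<lambda>j l. sqrt (K + e) * ?F (1/2) j l" and ?P' = "\<lambda>j l. (1 / sqrt (K + e)) * ?F (-1/2) j l"
    show "supported_on S ?P" "supported_on S ?P'" "symmetric_mat ?P"
      using F(4,5) unfolding supported_on_def symmetric_mat_def by simp_all
    show "bilin S ?P z z \<ge> 0" for z
      unfolding bilin_smult using F(6) \<open>K + e > 0\<close> by simp
    show "mat_mult S ?P ?P = Q"
      unfolding mat_mult_smult F(1) using \<open>K + e > 0\<close> by (simp add: X_def)
    show "mat_mult S ?P ?P' = id_on S" "mat_mult S ?P' ?P = id_on S"
      unfolding mat_mult_smult F(2,3) using \<open>K + e > 0\<close> by simp_all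
  qed
qed

lemma bilin_inv_sqrt:
  fixes z :: "nat \<Rightarrow> real"
  assumes fin: "finite S" and supp: "supported_on S Q" and sym: "symmetric_mat Q"
    and "e > 0" and lower: "\<And>z. e * sq_norm S z \<le> bilin S Q z z"
  defines "w \<equiv> mat_vec S (mat_inv_sqrt_on S Q) z"
  shows "bilin S Q w w = sq_norm S z"
proof -
  obtain P P' where P: "supported_on S P" "supported_on S P'" "symmetric_mat P"
    "\<And>z. bilin S P z z \<ge> 0" "mat_mult S P P = Q" "mat_mult S P P' = id_on S" "mat_mult S P' P = id_on S"
    using pos_def_sqrt_exists[OF assms(1-5)] by blast
  have "mat_sqrt_on S Q = P" by (rule mat_sqrt_on_eqI[OF fin P(1,3,4,5)])
  then have "mat_inv_sqrt_on S Q = P'"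
    unfolding mat_inv_sqrt_on_def using mat_inv_on_eqI[OF fin P(1,2,6,7)] by simp
  then have w: "w = mat_vec S P' z" unfolding w_def by simp
  have "bilin S Q w w = sq_norm S (mat_vec S P w)"
    unfolding P(5)[symmetric] bilin_mat_mult bilin_self_mat_vec[OF P(3)] ..
  also have "\<dots> = sq_norm S z"
    unfolding w mat_vec_mat_mult[symmetric] P(6) sq_norm_mat_vec_id_on[OF fin] ..
  finally show ?thesis .
qed

section \<open>The Fisher information matrix\<close>

lemma sq_norm_le_sq_sum_abs: "sq_norm S z \<le> (\<Sum>j\<in>S. \<bar>z j\<bar>)\<^sup>2"
proof -
  have "sq_norm S z = (L2_set z S)\<^sup>2"
    unfolding L2_set_def sq_norm_def by (simp add: sum_nonneg)
  then show ?thesis by (simp add: power_mono L2_set_le_sum_abs L2_set_nonneg)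
qed

lemma weighted_Cauchy_Schwarz:
  fixes u \<omega> :: "'a \<Rightarrow> real"
  assumes pos: "\<And>i. i \<in> I \<Longrightarrow> \<omega> i > 0" and total: "(\<Sum>i\<in>I. \<omega> i) \<le> 1"
  shows "(\<Sum>i\<in>I. \<bar>u i\<bar>)\<^sup>2 \<le> (\<Sum>i\<in>I. (u i)\<^sup>2 / \<omega> i)"
proof -
  have "(\<Sum>i\<in>I. \<bar>u i\<bar>) = (\<Sum>i\<in>I. (\<bar>u i\<bar> / sqrt (\<omega> i)) * sqrt (\<omega> i))"
  proof (intro sum.cong refl)
    fix i assume "i \<in> I"
    then have "sqrt (\<omega> i) > 0" using pos by simp
    then show "\<bar>u i\<bar> = \<bar>u i\<bar> / sqrt (\<omega> i) * sqrt (\<omega> i)" by simp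
  qed
  also have "\<dots>\<^sup>2 \<le> (\<Sum>i\<in>I. (\<bar>u i\<bar> / sqrt (\<omega> i))\<^sup>2) * (\<Sum>i\<in>I. (sqrt (\<omega> i))\<^sup>2)"
    by (rule Cauchy_Schwarz_ineq_sum)
  also have "\<dots> = (\<Sum>i\<in>I. (u i)\<^sup>2 / \<omega> i) * (\<Sum>i\<in>I. \<omega> i)"
    by (intro arg_cong2[where f = "(*)"] sum.cong refl) (simp_all add: power_divide less_imp_le pos)
  also have "\<dots> \<le> (\<Sum>i\<in>I. (u i)\<^sup>2 / \<omega> i)"
    using total pos by (intro mult_left_le sum_nonneg) (auto simp: less_imp_le)
  finally show ?thesis .
qed

locale topic_model =
  fixes D k r :: nat and A :: "nat \<Rightarrow> nat \<Rightarrow> real" and x :: "nat \<Rightarrow> real" and \<tau> \<kappa> :: real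
  assumes word_topic: "word_topic D k A" and simplex: "in_simplex k x"
    and A1: "A1 k x r \<tau>" and A2: "A2 D k A r \<kappa>" and \<kappa>_pos: "0 < \<kappa>"
begin

text \<open>The paper's \<open>R\<close>, the nonzero rows of \<open>A\<^sub>R\<close>, the weights \<open>\<langle>a\<^sub>i, x\<^sup>*\<rangle>\<close>
  and \<open>Q\<close>; the vector \<open>A\<^sub>R w\<close> is \<open>mat_vec topics A w\<close>.\<close>

abbreviation "topics \<equiv> supp k x"
abbreviation "active_words \<equiv> {i. i < D \<and> (\<exists>m\<in>topics. A i m \<noteq> 0)}"
abbreviation "word_weight i \<equiv> \<Sum>m\<in>topics. A i m * x m"
abbreviation "fisher_info \<equiv> fisher D topics A x"

lemma topics_subset: "topics \<subseteq> {..<k}"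
  unfolding supp_def by auto

lemma finite_topics: "finite topics"
  using topics_subset finite_subset by blast

lemma x_pos: "m \<in> topics \<Longrightarrow> x m > 0"
  using simplex unfolding supp_def in_simplex_def by (simp add: less_le)

lemma A_nonneg: "i < D \<Longrightarrow> m \<in> topics \<Longrightarrow> A i m \<ge> 0"
  using word_topic topics_subset unfolding word_topic_def by auto

lemma word_weight_nonneg: "i < D \<Longrightarrow> word_weight i \<ge> 0"
  using A_nonneg x_pos by (intro sum_nonneg) (simp add: less_imp_le)

lemma word_weight_pos: assumes "i \<in> active_words" shows "word_weight i > 0"
proof -
  from assms obtain m where m: "m \<in> topics" "A i m \<noteq> 0" and "i < D" by auto
  have "A i m * x m > 0" using A_nonneg[OF \<open>i < D\<close> m(1)] m x_pos[OF m(1)] by simp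
  then show ?thesis using finite_topics m(1) A_nonneg[OF \<open>i < D\<close>] x_pos
    by (intro sum_pos2[of topics m]) (auto intro!: mult_nonneg_nonneg simp: less_imp_le)
qed

text \<open>The weights sum to at most one because the columns of \<open>A\<close> and \<open>x\<^sup>*\<close> are
  probability vectors.\<close>

lemma sum_word_weight_le_1: "(\<Sum>i\<in>active_words. word_weight i) \<le> 1"
proof -
  have "(\<Sum>i\<in>active_words. word_weight i) \<le> (\<Sum>i<D. word_weight i)"
    by (rule sum_mono2) (auto simp: word_weight_nonneg)
  also have "\<dots> = (\<Sum>m\<in>topics. x m * (\<Sum>i<D. A i m))"
    by (subst sum.swap) (simp add: sum_distrib_left sum_distrib_right mult_ac)
  also have "\<dots> = (\<Sum>m\<in>topics. x m)"
    using word_topic topics_subset unfolding word_topic_def by (intro sum.cong) auto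
  also have "\<dots> = (\<Sum>m<k. x m)"
    by (rule sum.mono_neutral_left) (use topics_subset in \<open>auto simp: supp_def\<close>)
  also have "\<dots> = 1" using simplex unfolding in_simplex_def by simp
  finally show ?thesis .
qed

lemma supported_on_fisher: "supported_on topics fisher_info"
  unfolding supported_on_def fisher_def by auto

lemma symmetric_fisher: "symmetric_mat fisher_info"
  unfolding symmetric_mat_def fisher_def by (auto simp: mult.commute)

lemma bilin_fisher:
  "bilin topics fisher_info w w = (\<Sum>i\<in>active_words. (mat_vec topics A w i)\<^sup>2 / word_weight i)"
proof -
  have "bilin topics fisher_info w w
      = (\<Sum>j\<in>topics. \<Sum>l\<in>topics. \<Sum>i\<in>active_words. (A i j * w j) * (A i l * w l) / word_weight i)"
    unfolding bilin_def fisher_def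
    by (intro sum.cong refl) (simp add: sum_distrib_left sum_distrib_right mult_ac)
  also have "\<dots>
      = (\<Sum>j\<in>topics. \<Sum>i\<in>active_words. \<Sum>l\<in>topics. (A i j * w j) * (A i l * w l) / word_weight i)"
    by (intro sum.cong refl sum.swap)
  also have "\<dots>
      = (\<Sum>i\<in>active_words. \<Sum>j\<in>topics. \<Sum>l\<in>topics. (A i j * w j) * (A i l * w l) / word_weight i)"
    by (rule sum.swap)
  also have "\<dots> = (\<Sum>i\<in>active_words. (mat_vec topics A w i)\<^sup>2 / word_weight i)"
    unfolding mat_vec_def power2_eq_square sum_product sum_divide_distrib by (simp add: mult_ac)
  finally show ?thesis .
qed

lemma sq_sum_abs_image_le_fisher:
  "(\<Sum>i<D. \<bar>mat_vec topics A w i\<bar>)\<^sup>2 \<le> bilin topics fisher_info w w"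
proof -
  have "(\<Sum>i<D. \<bar>mat_vec topics A w i\<bar>) = (\<Sum>i\<in>active_words. \<bar>mat_vec topics A w i\<bar>)"
    by (rule sum.mono_neutral_right) (auto simp: mat_vec_def)
  then show ?thesis
    unfolding bilin_fisher using weighted_Cauchy_Schwarz[OF word_weight_pos sum_word_weight_le_1] by simp
qed

lemma sum_abs_div_kappa_le_image:
  "(\<Sum>j\<in>topics. \<bar>w j\<bar>) / \<kappa> \<le> (\<Sum>i<D. \<bar>mat_vec topics A w i\<bar>)"
proof -
  define v where "v = (\<lambda>j. if j \<in> topics then w j else 0)"
  have "card (supp k v) \<le> card topics"
    using finite_topics by (intro card_mono) (auto simp: supp_def v_def)
  also have "\<dots> \<le> r" using A1 unfolding A1_def by simp
  finally have "(\<Sum>j<k. \<bar>v j\<bar>) / \<kappa> \<le> (\<Sum>i<D. \<bar>\<Sum>j<k. A i j * v j\<bar>)"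
    using A2 unfolding A2_def by blast
  moreover have restrict: "(\<Sum>j<k. if j \<in> topics then f j else 0) = (\<Sum>j\<in>topics. f j)"
    for f :: "nat \<Rightarrow> real"
    using topics_subset by (simp add: sum.inter_restrict[symmetric] Int_absorb1)
  have "(\<Sum>j<k. A i j * v j) = mat_vec topics A w i" for i
    unfolding v_def mat_vec_def using restrict by (simp add: if_distrib cong: if_cong)
  moreover have "(\<Sum>j<k. \<bar>v j\<bar>) = (\<Sum>j\<in>topics. \<bar>w j\<bar>)"
    unfolding v_def using restrict by (simp add: if_distrib cong: if_cong)
  ultimately show ?thesis by simp
qed

lemma fisher_lower_bound: "1 / \<kappa>\<^sup>2 * sq_norm topics z \<le> bilin topics fisher_info z z"
proof -
  have "1 / \<kappa>\<^sup>2 * sq_norm topics z \<le> ((\<Sum>j\<in>topics. \<bar>z j\<bar>) / \<kappa>)\<^sup>2"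
    using sq_norm_le_sq_sum_abs \<kappa>_pos by (simp add: power_divide divide_right_mono)
  also have "\<dots> \<le> (\<Sum>i<D. \<bar>mat_vec topics A z i\<bar>)\<^sup>2"
    using sum_abs_div_kappa_le_image \<kappa>_pos by (intro power_mono) (auto simp: sum_nonneg)
  also have "\<dots> \<le> bilin topics fisher_info z z" by (rule sq_sum_abs_image_le_fisher)
  finally show ?thesis .
qed

lemma pos_def_fisher: "pos_def_on topics fisher_info"
  unfolding pos_def_on_def symmetric_on_def quad_form_eq_bilin
proof (intro conjI ballI allI impI)
  show "fisher_info j l = fisher_info l j" for j l
    using symmetric_fisher unfolding symmetric_mat_def by blast
next
  fix z :: "nat \<Rightarrow> real"
  assume "\<exists>j\<in>topics. z j \<noteq> 0"
  then obtain j where "j \<in> topics" "z j \<noteq> 0" by blast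
  then have "0 < (z j)\<^sup>2" by simp
  also have "\<dots> \<le> sq_norm topics z" by (rule sq_le_sq_norm[OF finite_topics \<open>j \<in> topics\<close>])
  finally have "0 < 1 / \<kappa>\<^sup>2 * sq_norm topics z" using \<kappa>_pos by simp
  also have "\<dots> \<le> bilin topics fisher_info z z" by (rule fisher_lower_bound)
  finally show "0 < bilin topics fisher_info z z" .
qed

lemma loewner_fisher: "loewner_ge topics fisher_info (\<lambda>j l. (1 / \<kappa>\<^sup>2) * id_on topics j l)"
  unfolding loewner_ge_def pos_semidef_on_def quad_form_eq_bilin
proof (intro conjI allI)
  show "symmetric_on topics (\<lambda>j l. fisher_info j l - 1 / \<kappa>\<^sup>2 * id_on topics j l)"
    using symmetric_fisher unfolding symmetric_mat_def symmetric_on_def id_on_def by auto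
  show "0 \<le> bilin topics (\<lambda>j l. fisher_info j l - 1 / \<kappa>\<^sup>2 * id_on topics j l) z z" for z
    unfolding bilin_diff bilin_smult bilin_id_on[OF finite_topics] using fisher_lower_bound[of z] by simp
qed

lemma sum_abs_image_inv_sqrt_le_1:
  assumes "sq_norm topics z \<le> 1"
  shows "(\<Sum>i<D. \<bar>mat_vec topics A (mat_vec topics (mat_inv_sqrt_on topics fisher_info) z) i\<bar>) \<le> 1"
proof -
  let ?w = "mat_vec topics (mat_inv_sqrt_on topics fisher_info) z"
  have "bilin topics fisher_info ?w ?w \<le> 1"
    using bilin_inv_sqrt[OF finite_topics supported_on_fisher symmetric_fisher _ fisher_lower_bound]
      \<kappa>_pos assms by simp
  then have "(\<Sum>i<D. \<bar>mat_vec topics A ?w i\<bar>)\<^sup>2 \<le> 1\<^sup>2"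
    using sq_sum_abs_image_le_fisher[of ?w] by simp
  then show ?thesis by (rule power2_le_imp_le) simp
qed

lemma norm_2_1_image_inv_sqrt:
  "norm_2_1 {..<D} topics (mat_mult topics A (mat_inv_sqrt_on topics fisher_info)) \<le> 1"
  unfolding lessThan_def[symmetric]
  by (rule norm_2_1_le) (simp add: mat_vec_mat_mult sum_abs_image_inv_sqrt_le_1)

lemma norm_2_1_inv_sqrt: "norm_2_1 topics topics (mat_inv_sqrt_on topics fisher_info) \<le> \<kappa>"
proof (rule norm_2_1_le)
  fix z assume "sq_norm topics z \<le> 1"
  then have "(\<Sum>j\<in>topics. \<bar>mat_vec topics (mat_inv_sqrt_on topics fisher_info) z j\<bar>) / \<kappa> \<le> 1"
    using sum_abs_div_kappa_le_image sum_abs_image_inv_sqrt_le_1 order_trans by blast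
  then show "(\<Sum>j\<in>topics. \<bar>mat_vec topics (mat_inv_sqrt_on topics fisher_info) z j\<bar>) \<le> \<kappa>"
    using \<kappa>_pos by (simp add: divide_le_eq)
qed

end

theorem lemma5p4:
  fixes D k r :: nat and A :: "nat \<Rightarrow> nat \<Rightarrow> real" and x :: "nat \<Rightarrow> real"
    and \<tau> \<kappa> :: real
  assumes "word_topic D k A"
    and "in_simplex k x"
    and "0 < \<tau>" and "\<tau> \<le> 1" and "0 < \<kappa>"
    and "A1 k x r \<tau>"
    and "A2 D k A r \<kappa>"
  defines "R \<equiv> supp k x"
  defines "Q \<equiv> fisher D R A x"
  shows "pos_def_on R Q
    \<and> norm_2_1 {..<D} R (mat_mult R A (mat_inv_sqrt_on R Q)) \<le> 1
    \<and> norm_2_1 R R (mat_inv_sqrt_on R Q) \<le> \<kappa>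
    \<and> loewner_ge R Q (\<lambda>j l. (1 / \<kappa>\<^sup>2) * id_on R j l)"
proof -
  interpret topic_model D k r A x \<tau> \<kappa>
    using assms by unfold_locales
  show ?thesis
    unfolding R_def Q_def
    using pos_def_fisher norm_2_1_image_inv_sqrt norm_2_1_inv_sqrt loewner_fisher by blast
qed

end
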